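(* Let $\hat{\mathcal T}$ be a regular refinement of $\mathcal T$ (both in $\mathbb T$), let $u_{CR}\in CR^1_0(\mathcal T)$ and $\hat u_{CR}\in CR^1_0(\hat{\mathcal T})$ be the Crouzeix–Raviart FEM solutions with right-hand side $f\in L^2(\Omega)$, and let $\Lambda_1^2:=48\cot(\omega_0)(2\sin(\omega_0))^{-1/2}$. Then $$|\eta_{CR}(\mathcal T,\mathcal T\cap\hat{\mathcal T})-\eta_{CR}(\hat{\mathcal T},\mathcal T\cap\hat{\mathcal T})|\le\Lambda_1\|\nabla_{NC}(u_{CR}-\hat u_{CR})\|_{L^2(\Omega)}.$$
   Context: $\Omega\subset\mathbb R^2$ is a bounded polygonal Lipschitz domain, $\mathbb T$ is the set of regular triangulations obtained from an initial triangulation by successive newest-vertex bisections, and $\omega_0>0$ is a lower bound for all interior angles of all triangles involved. $CR^1_0(\mathcal T)$ is the Crouzeix–Raviart space of piecewise affine functions continuous at midpoints of interior edges and zero at midpoints of boundary edges; $\nabla_{NC}$ is the piecewise gradient; $u_{CR}\in CR^1_0(\mathcal T)$ satisfies $\int_\Omega\nabla_{NC}u_{CR}\cdot\nabla_{NC}v_{CR}\,dx=\int_\Omega fv_{CR}\,dx$ for all $v_{CR}\in CR^1_0(\mathcal T)$. For $K\in\mathcal T$, $\eta_{CR}^2(\mathcal T,K):=|K|\,\|f\|_{L^2(K)}^2+|K|^{1/2}\sum_{E\text{ edge of }K}\|[\partial u_{CR}/\partial s]_E\|_{L^2(E)}^2$, where $\partial/\partial s$ is the tangential derivative, $[\cdot]_E$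 the jump across an interior edge and the trace on a boundary edge; $\eta_{CR}^2(\mathcal T,\mathcal M):=\sum_{K\in\mathcal M}\eta_{CR}^2(\mathcal T,K)$ (analogously for $\hat{\mathcal T}$ with $\hat u_{CR}$). *)

theory Defs
  imports "HOL-Analysis.Analysis"
begin

type_synonym pt = "real^2"

text \<open>A labelled triangle (z0, z1, z2): z0 is the newest vertex, z1 z2 the reference edge.\<close>
type_synonym tri = "pt \<times> pt \<times> pt"

definition verts :: "tri \<Rightarrow> pt set" where
  "verts K = (case K of (z0, z1, z2) \<Rightarrow> {z0, z1, z2})"

definition tri_hull :: "tri \<Rightarrow> pt set" where
  "tri_hull K = convex hull (verts K)"

definition area :: "tri \<Rightarrow> real" where
  "area K = measure lebesgue (tri_hull K)"

definition edges :: "tri \<Rightarrow> (pt \<times> pt) list" where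
  "edges K = (case K of (z0, z1, z2) \<Rightarrow> [(z1, z2), (z2, z0), (z0, z1)])"

definition nondeg :: "tri \<Rightarrow> bool" where
  "nondeg K = (case K of (z0, z1, z2) \<Rightarrow> \<not> collinear {z0, z1, z2})"

definition vangle :: "pt \<Rightarrow> pt \<Rightarrow> pt \<Rightarrow> real" where
  "vangle a b c = arccos (((b - a) \<bullet> (c - a)) / (norm (b - a) * norm (c - a)))"

definition min_angle_ge :: "real \<Rightarrow> tri \<Rightarrow> bool" where
  "min_angle_ge \<omega> K = (case K of (z0, z1, z2) \<Rightarrow>
      \<omega> \<le> vangle z0 z1 z2 \<and> \<omega> \<le> vangle z1 z2 z0 \<and> \<omega> \<le> vangle z2 z0 z1)"

definition lipschitz_domain :: "pt set \<Rightarrow> bool" where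
  "lipschitz_domain \<Omega> \<longleftrightarrow> open \<Omega> \<and> connected \<Omega> \<and> bounded \<Omega> \<and> \<Omega> \<noteq> {} \<and>
     (\<forall>x \<in> frontier \<Omega>. \<exists>Q h L \<epsilon>. orthogonal_transformation (Q :: pt \<Rightarrow> pt) \<and> \<epsilon> > 0 \<and>
        (L::real)-lipschitz_on UNIV (h :: real \<Rightarrow> real) \<and>
        \<Omega> \<inter> ball x \<epsilon> = {y \<in> ball x \<epsilon>. (Q (y - x)) $ 2 < h ((Q (y - x)) $ 1)})"

definition regular_triangulation :: "pt set \<Rightarrow> tri set \<Rightarrow> bool" where
  "regular_triangulation \<Omega> T \<longleftrightarrow> finite T \<and> T \<noteq> {} \<and> (\<forall>K\<in>T. nondeg K) \<and>
     \<Union>(tri_hull ` T) = closure \<Omega> \<and>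
     (\<forall>K\<in>T. \<forall>K'\<in>T. K \<noteq> K' \<longrightarrow>
        card (verts K \<inter> verts K') \<le> 2 \<and>
        tri_hull K \<inter> tri_hull K' = convex hull (verts K \<inter> verts K'))"

definition bisect :: "tri \<Rightarrow> tri set" where
  "bisect K = (case K of (z0, z1, z2) \<Rightarrow>
      (let m = (1/2) *\<^sub>R (z1 + z2) in {(m, z0, z1), (m, z2, z0)}))"

definition nvb_step :: "tri set \<Rightarrow> tri set \<Rightarrow> bool" where
  "nvb_step T T' \<longleftrightarrow> (\<exists>K\<in>T. T' = (T - {K}) \<union> bisect K)"

definition admissible :: "pt set \<Rightarrow> tri set \<Rightarrow> tri set set" where
  "admissible \<Omega> T0 = {T. nvb_step\<^sup>*\<^sup>* T0 T \<and> regular_triangulation \<Omega> T}"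

text \<open>A piecewise affine function: on each triangle K the affine map x \<mapsto> g \<bullet> x + c,
  stored as (g, c). Hence its piecewise gradient on K is fst (v K).\<close>
type_synonym pw_affine = "tri \<Rightarrow> pt \<times> real"

definition aval :: "pt \<times> real \<Rightarrow> pt \<Rightarrow> real" where
  "aval gc x = fst gc \<bullet> x + snd gc"

definition emid :: "pt \<times> pt \<Rightarrow> pt" where
  "emid E = (1/2) *\<^sub>R (fst E + snd E)"

definition boundary_edge :: "pt set \<Rightarrow> pt \<times> pt \<Rightarrow> bool" where
  "boundary_edge \<Omega> E \<longleftrightarrow> closed_segment (fst E) (snd E) \<subseteq> frontier \<Omega>"

definition has_edge :: "tri \<Rightarrow> pt \<times> pt \<Rightarrow> bool" where
  "has_edge K E \<longleftrightarrow> {fst E, snd E} \<subseteq> verts K"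

definition CR0 :: "pt set \<Rightarrow> tri set \<Rightarrow> pw_affine \<Rightarrow> bool" where
  "CR0 \<Omega> T v \<longleftrightarrow> (\<forall>K\<in>T. \<forall>E\<in>set (edges K).
      (boundary_edge \<Omega> E \<longrightarrow> aval (v K) (emid E) = 0) \<and>
      (\<not> boundary_edge \<Omega> E \<longrightarrow>
         (\<forall>K'\<in>T. has_edge K' E \<longrightarrow> aval (v K) (emid E) = aval (v K') (emid E))))"

definition CR_solution :: "pt set \<Rightarrow> tri set \<Rightarrow> (pt \<Rightarrow> real) \<Rightarrow> pw_affine \<Rightarrow> bool" where
  "CR_solution \<Omega> T f u \<longleftrightarrow> CR0 \<Omega> T u \<and>
     (\<forall>v. CR0 \<Omega> T v \<longrightarrow>
        (\<Sum>K\<in>T. area K * (fst (u K) \<bullet> fst (v K))) =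
        (\<Sum>K\<in>T. (LINT x:tri_hull K|lebesgue. f x * aval (v K) x)))"

text \<open>Squared L2(E) norm of the jump (interior edge) resp. trace (boundary edge)
  of the tangential derivative of u along the edge E of K.\<close>
definition tjump2 :: "pt set \<Rightarrow> tri set \<Rightarrow> pw_affine \<Rightarrow> tri \<Rightarrow> pt \<times> pt \<Rightarrow> real" where
  "tjump2 \<Omega> T u K E =
     (let t = (1 / dist (fst E) (snd E)) *\<^sub>R (snd E - fst E) in
      if boundary_edge \<Omega> E then dist (fst E) (snd E) * (fst (u K) \<bullet> t)^2
      else (let K' = (THE K'. K' \<in> T \<and> K' \<noteq> K \<and> has_edge K' E) in
            dist (fst E) (snd E) * ((fst (u K) - fst (u K')) \<bullet> t)^2))"

definition eta2 :: "pt set \<Rightarrow> tri set \<Rightarrow> (pt \<Rightarrow> real) \<Rightarrow> pw_affine \<Rightarrow> tri \<Rightarrow> real" where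
  "eta2 \<Omega> T f u K = area K * (LINT x:tri_hull K|lebesgue. (f x)^2)
      + sqrt (area K) * (\<Sum>E\<leftarrow>edges K. tjump2 \<Omega> T u K E)"

definition eta :: "pt set \<Rightarrow> tri set \<Rightarrow> (pt \<Rightarrow> real) \<Rightarrow> pw_affine \<Rightarrow> tri set \<Rightarrow> real" where
  "eta \<Omega> T f u M = sqrt (\<Sum>K\<in>M. eta2 \<Omega> T f u K)"

text \<open>\<parallel>\<nabla>_NC (u - \<hat>u)\<parallel>_{L2(\<Omega>)} for u piecewise affine on T and \<hat>u on \<hat>T.\<close>
definition nc_dist :: "tri set \<Rightarrow> pw_affine \<Rightarrow> tri set \<Rightarrow> pw_affine \<Rightarrow> real" where
  "nc_dist T u T' u' = sqrt (\<Sum>K\<in>T. \<Sum>K'\<in>T'.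
      measure lebesgue (tri_hull K \<inter> tri_hull K') * (norm (fst (u K) - fst (u' K')))^2)"

end

theory Submission
  imports Defs
begin

text \<open>On a triangle K of T \<inter> Th both estimators have the same volume term |K| \<parallel>f\<parallel>^2,
  so by the triangle inequality in l^2 their difference is bounded by the l^2 norm of the
  differences of the weighted tangential jumps. Across a boundary edge of K this difference is
  the tangential component of \<nabla>(u - uh) on K. Across an interior edge E, the coarse neighbour
  K' \<in> T of K contains the fine neighbour L \<in> Th, so the difference also involves
  \<nabla>u|K' - \<nabla>uh|L, which lives on L \<subseteq> K'. The minimum angle condition bounds the weights
  |K|^(1/2) |E| by C |K| and by C |L| with C = 4 cot \<omega>0 / sqrt (2 sin \<omega>0). Every pair (K, K) and
  every pair (K', L) is counted at most three times, which gives \<Lambda>1^2 = 12 C.\<close>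

section \<open>Planar geometry\<close>

definition cross :: "pt \<Rightarrow> pt \<Rightarrow> real" where
  "cross v w = v$1 * w$2 - v$2 * w$1"

lemma pt_eq_iff: "(x::pt) = y \<longleftrightarrow> x$1 = y$1 \<and> x$2 = y$2"
  by (simp add: vec_eq_iff forall_2)

lemma inner_pt: "(x::pt) \<bullet> y = x$1 * y$1 + x$2 * y$2"
  by (simp add: inner_vec_def sum_2)

lemma norm_pt_power2: "(norm (x::pt))^2 = x$1^2 + x$2^2"
  unfolding power2_norm_eq_inner inner_pt by (simp add: power2_eq_square)

lemma cross_add_right: "cross w (a *\<^sub>R v + b *\<^sub>R v') = a * cross w v + b * cross w v'"
  by (simp add: cross_def algebra_simps)

lemma cross_scaleR_right [simp]: "cross w (a *\<^sub>R v) = a * cross w v"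
  by (simp add: cross_def algebra_simps)

lemma cross_self [simp]: "cross v v = 0"
  by (simp add: cross_def)

lemma cross_rotate:
  "cross (c - b) (a - b) = cross (b - a) (c - a)" "cross (a - c) (b - c) = cross (b - a) (c - a)"
  by (simp_all add: cross_def algebra_simps)

lemma lagrange_identity_pt: "(norm v * norm w)^2 = (v \<bullet> w)^2 + (cross v w)^2"
  unfolding power_mult_distrib norm_pt_power2 inner_pt cross_def by (simp add: power2_eq_square algebra_simps)

lemma inner_triangle_identity:
  "((q - p) \<bullet> (r - p)) * ((r - q) \<bullet> (p - q)) + ((r - q) \<bullet> (p - q)) * ((p - r) \<bullet> (q - r))
    + ((p - r) \<bullet> (q - r)) * ((q - p) \<bullet> (r - p)) = (cross (q - p) (r - p))^2"
  by (simp add: inner_pt cross_def power2_eq_square algebra_simps)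

lemma inner_edge_identity:
  fixes p q r :: pt
  shows "(q - p) \<bullet> (r - p) + (r - q) \<bullet> (p - q) = (norm (q - p))^2"
  unfolding inner_pt norm_pt_power2 by (simp add: power2_eq_square algebra_simps)

lemma collinear_if_cross_eq_0:
  assumes "cross (b - a) (c - a) = 0"
  shows "collinear {a, b, c}"
proof (cases "b = a")
  case True
  then show ?thesis by simp
next
  case False
  define p where "p = (b - a)$1"
  define q where "q = (b - a)$2"
  define r where "r = (c - a)$1"
  define s where "s = (c - a)$2"
  have "p * s = q * r" and "p^2 + q^2 \<noteq> 0"
    using assms False unfolding p_def q_def r_def s_def cross_def pt_eq_iff
    by (auto simp: add_nonneg_eq_0_iff)
  then have "r = (r*p + s*q) / (p^2 + q^2) * p \<and> s = (r*p + s*q) / (p^2 + q^2) * q"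
    by (simp add: field_simps power2_eq_square)
  then have "c - a = ((r*p + s*q) / (p^2 + q^2)) *\<^sub>R (b - a)"
    unfolding pt_eq_iff p_def q_def r_def s_def by simp
  then have "collinear {0, b - a, c - a}" by (auto simp: collinear_lemma)
  then have "collinear {b, a, c}" by (subst collinear_3) (auto simp: NO_MATCH_def)
  then show ?thesis by (simp add: insert_commute)
qed

lemma cross_neq_0_if_not_collinear: "\<not> collinear {a, b, c} \<Longrightarrow> cross (b - a) (c - a) \<noteq> 0"
  using collinear_if_cross_eq_0 by blast

lemma area_eq_cross: "area (z0, z1, z2) = \<bar>cross (z1 - z0) (z2 - z0)\<bar> / 2"
proof -
  have "closed (convex hull {z0, z1, z2})"
    by (intro compact_imp_closed finite_imp_compact_convex_hull) auto
  then have "area (z0, z1, z2) = measure lborel (convex hull {z0, z1, z2})"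
    by (simp add: area_def tri_hull_def verts_def borel_closed)
  then show ?thesis
    using content_triangle[of z0 z1 z2] by (simp add: cross_def abs_minus_commute algebra_simps)
qed

lemma open_segment_notin_closed_segment:
  assumes "\<not> collinear {a, b, c}" "q \<in> open_segment a b"
  shows "q \<notin> closed_segment b c"
proof
  assume "q \<in> closed_segment b c"
  then have "collinear {b, q, c}"
    by (intro collinear_subset[OF collinear_closed_segment[of b c]]) auto
  moreover have "collinear {a, b, q}"
    using assms(2) segment_open_subset_closed[of a b]
    by (intro collinear_subset[OF collinear_closed_segment[of a b]]) auto
  moreover have "b \<noteq> q" using assms(2) by (auto simp: open_segment_def)
  ultimately show False using assms(1) collinear_3_trans by blast
qed

lemma open_segment_in_hull_imp_ends:
  assumes "\<not> collinear {a, b, c}" "S \<subseteq> {a, b, c}"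
    and "q \<in> open_segment a b" "q \<in> convex hull S"
  shows "a \<in> S \<and> b \<in> S"
proof (intro conjI; rule ccontr)
  assume "a \<notin> S"
  then have "q \<in> convex hull {b, c}" using assms(2,4) hull_mono[of S "{b, c}"] by blast
  then show False using open_segment_notin_closed_segment[OF assms(1,3)] by (simp add: segment_convex_hull)
next
  assume "b \<notin> S"
  then have "q \<in> convex hull {a, c}" using assms(2,4) hull_mono[of S "{a, c}"] by blast
  moreover have "\<not> collinear {b, a, c}" using assms(1) by (simp add: insert_commute)
  ultimately show False
    using open_segment_notin_closed_segment[of b a c q] assms(3) by (simp add: segment_convex_hull open_segment_commute)
qed

lemma cross_eq_0_if_in_segment:
  assumes "(x::pt) \<in> closed_segment a b"
  shows "cross (b - a) (x - a) = 0"
proof -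
  obtain \<theta> where "x = (1 - \<theta>) *\<^sub>R a + \<theta> *\<^sub>R b" using assms by (auto simp: closed_segment_def)
  then have "x - a = \<theta> *\<^sub>R (b - a)" by (simp add: algebra_simps)
  then show ?thesis by simp
qed

lemma cross_in_hull_same_side:
  fixes a b c x :: pt
  assumes "x \<in> convex hull {a, b, c}"
  shows "\<exists>w\<ge>0. cross (b - a) (x - a) = w * cross (b - a) (c - a)"
proof -
  obtain u v w where "0 \<le> w" "u + v + w = 1" "x = u *\<^sub>R a + v *\<^sub>R b + w *\<^sub>R c"
    using assms by (auto simp: convex_hull_3)
  then have "0 \<le> w" "x - a = v *\<^sub>R (b - a) + w *\<^sub>R (c - a)"
    by (simp_all add: algebra_simps flip: scaleR_add_left)
  then show ?thesis by (auto simp: cross_add_right)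
qed

lemma in_convex_hull_3I:
  "0 \<le> u \<Longrightarrow> 0 \<le> v \<Longrightarrow> 0 \<le> w \<Longrightarrow> u + v + w = 1 \<Longrightarrow> u *\<^sub>R a + v *\<^sub>R b + w *\<^sub>R c \<in> convex hull {a, b, c}"
  by (auto simp: convex_hull_3)

lemma cramer_pt:
  assumes "cross v w \<noteq> 0"
  shows "x = (cross x w / cross v w) *\<^sub>R v + (cross v x / cross v w) *\<^sub>R w"
proof -
  have "x$1 * cross v w = cross x w * v$1 + cross v x * w$1"
       "x$2 * cross v w = cross x w * v$2 + cross v x * w$2"
    by (simp_all add: cross_def algebra_simps)
  then show ?thesis using assms unfolding pt_eq_iff by (simp add: field_simps)
qed

text \<open>A point of the first triangle close to the midpoint of ab, written in barycentric
  coordinates with respect to the second triangle.\<close>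
lemma common_point_off_line:
  fixes a b c1 c2 :: pt
  assumes D2: "cross (b - a) (c2 - a) \<noteq> 0"
    and same_side: "cross (b - a) (c1 - a) * cross (b - a) (c2 - a) > 0"
  shows "\<exists>x \<in> convex hull {a, b, c1} \<inter> convex hull {a, b, c2}. cross (b - a) (x - a) \<noteq> 0"
proof -
  define \<beta> where "\<beta> = cross (c1 - a) (c2 - a) / cross (b - a) (c2 - a)"
  define \<gamma> where "\<gamma> = cross (b - a) (c1 - a) / cross (b - a) (c2 - a)"
  define \<alpha> where "\<alpha> = 1 - \<beta> - \<gamma>"
  have c1: "c1 - a = \<beta> *\<^sub>R (b - a) + \<gamma> *\<^sub>R (c2 - a)"
    using cramer_pt[OF D2, of "c1 - a"] by (simp add: \<beta>_def \<gamma>_def)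
  have \<gamma>: "\<gamma> > 0" using same_side by (simp add: \<gamma>_def zero_less_divide_iff zero_less_mult_iff)
  define t where "t = 1 / (4 + 4 * \<bar>\<beta>\<bar> + 4 * \<bar>\<alpha>\<bar>)"
  have t: "0 < t" "t \<le> 1/4" "t * \<bar>\<beta>\<bar> \<le> 1/4" "t * \<bar>\<alpha>\<bar> \<le> 1/4"
    unfolding t_def by (simp_all add: field_simps)
  then have "\<bar>t * \<beta>\<bar> \<le> 1/4" "\<bar>t * \<alpha>\<bar> \<le> 1/4" by (simp_all add: abs_mult)
  then have tb: "-1/4 \<le> t * \<beta>" "-1/4 \<le> t * \<alpha>" by linarith+
  define x where "x = ((1 - t)/2) *\<^sub>R a + ((1 - t)/2) *\<^sub>R b + t *\<^sub>R c1"
  have x1: "x \<in> convex hull {a, b, c1}" unfolding x_def using t(1,2)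
    by (intro in_convex_hull_3I) auto
  have xa: "x - a = ((1 - t)/2) *\<^sub>R (b - a) + t *\<^sub>R (c1 - a)"
    unfolding x_def pt_eq_iff by (simp add: field_simps)
  then have "x = a + ((1 - t)/2 + t * \<beta>) *\<^sub>R (b - a) + (t * \<gamma>) *\<^sub>R (c2 - a)"
    unfolding c1 by (simp add: algebra_simps eq_diff_eq')
  then have xb: "x = ((1 - t)/2 + t * \<alpha>) *\<^sub>R a + ((1 - t)/2 + t * \<beta>) *\<^sub>R b + (t * \<gamma>) *\<^sub>R c2"
    unfolding \<alpha>_def pt_eq_iff by (simp add: field_simps)
  have x2: "x \<in> convex hull {a, b, c2}"
    unfolding xb
  proof (rule in_convex_hull_3I)
    show "0 \<le> (1 - t)/2 + t * \<alpha>" using t(2) tb(2) by (simp add: diff_divide_distrib)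
    show "0 \<le> (1 - t)/2 + t * \<beta>" using t(2) tb(1) by (simp add: diff_divide_distrib)
    show "0 \<le> t * \<gamma>" using t(1) \<gamma> by simp
    show "((1 - t)/2 + t * \<alpha>) + ((1 - t)/2 + t * \<beta>) + t * \<gamma> = 1"
      by (simp add: \<alpha>_def algebra_simps)
  qed
  have "cross (b - a) (x - a) = t * cross (b - a) (c1 - a)" unfolding xa by (simp add: cross_add_right)
  then have "cross (b - a) (x - a) \<noteq> 0" using t(1) same_side by auto
  then show ?thesis using x1 x2 by blast
qed

lemma beyond_edge_notin_hull:
  fixes a b c q :: pt
  assumes "\<not> collinear {a, b, c}" "q \<in> closed_segment a b" "t > 0"
  shows "q + t *\<^sub>R (q - c) \<notin> convex hull {a, b, c}"
proof
  assume "q + t *\<^sub>R (q - c) \<in> convex hull {a, b, c}"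
  then obtain w where "0 \<le> w" "cross (b - a) (q + t *\<^sub>R (q - c) - a) = w * cross (b - a) (c - a)"
    using cross_in_hull_same_side by blast
  moreover have "cross (b - a) (q - a) = 0" using assms(2) by (rule cross_eq_0_if_in_segment)
  then have "cross (b - a) ((1 + t) *\<^sub>R (q - a) + (- t) *\<^sub>R (c - a)) = - t * cross (b - a) (c - a)"
    by (simp only: cross_add_right)
  moreover have "q + t *\<^sub>R (q - c) - a = (1 + t) *\<^sub>R (q - a) + (- t) *\<^sub>R (c - a)"
    by (simp add: algebra_simps)
  ultimately have "(w + t) * cross (b - a) (c - a) = 0" by (simp add: algebra_simps)
  then show False using \<open>0 \<le> w\<close> \<open>t > 0\<close> cross_neq_0_if_not_collinear[OF assms(1)] by simp
qed

lemma inner_unit_diff_sq_le: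
  assumes "norm t = 1"
  shows "((v - w) \<bullet> t)^2 \<le> 2 * (norm v)^2 + 2 * (norm (w::pt))^2"
proof -
  have "\<bar>(v - w) \<bullet> t\<bar> \<le> norm (v - w)" using Cauchy_Schwarz_ineq2[of "v - w" t] assms by simp
  from power_mono[OF this abs_ge_zero, of 2]
  have "((v - w) \<bullet> t)^2 \<le> (norm (v - w))^2" by simp
  also have "\<dots> \<le> (norm v + norm w)^2" by (simp add: norm_triangle_ineq4 power_mono)
  also have "\<dots> \<le> 2 * (norm v)^2 + 2 * (norm w)^2"
    using zero_le_power2[of "norm v - norm w"] by (simp add: power2_eq_square algebra_simps)
  finally show ?thesis .
qed

section \<open>Shape regularity\<close>

lemma cot_antimono:
  assumes "0 < x" "x \<le> y" "y < pi"
  shows "cot y \<le> cot x"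
proof -
  have "sin x > 0" "sin y > 0" using assms by (auto intro!: sin_gt_zero)
  moreover have "sin (y - x) \<ge> 0" using assms by (intro sin_ge_zero) auto
  moreover have "cot x - cot y = sin (y - x) / (sin x * sin y)"
    using calculation by (simp add: cot_def sin_diff field_simps)
  ultimately have "cot x - cot y \<ge> 0" by simp
  then show ?thesis by simp
qed

lemma vangle_bounds_and_cot:
  fixes a b c :: pt
  assumes "\<not> collinear {a, b, c}"
  shows "0 < vangle a b c" "vangle a b c < pi"
    and "cot (vangle a b c) = ((b - a) \<bullet> (c - a)) / \<bar>cross (b - a) (c - a)\<bar>"
proof -
  let ?v = "b - a" and ?w = "c - a"
  define x where "x = (?v \<bullet> ?w) / (norm ?v * norm ?w)"
  have D: "cross ?v ?w \<noteq> 0" using cross_neq_0_if_not_collinear[OF assms] .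
  then have nz: "?v \<noteq> 0" "?w \<noteq> 0" by (auto simp: cross_def)
  then have N: "norm ?v * norm ?w > 0" by simp
  define P where "P = (norm ?v * norm ?w)^2"
  have P: "P > 0" "P = (?v \<bullet> ?w)^2 + (cross ?v ?w)^2"
    using N lagrange_identity_pt[of ?v ?w] unfolding P_def by (metis zero_less_power, simp)
  have "x^2 = (?v \<bullet> ?w)^2 / P" by (simp add: x_def P_def power_divide)
  then have "1 - x^2 = (P - (?v \<bullet> ?w)^2) / P" using P(1) by (simp add: diff_divide_distrib)
  then have x2: "1 - x^2 = (cross ?v ?w)^2 / P" using P(2) by simp
  have "sqrt P = norm ?v * norm ?w" using N by (simp add: P_def)
  then have sq: "sqrt (1 - x^2) = \<bar>cross ?v ?w\<bar> / (norm ?v * norm ?w)"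
    using x2 by (simp add: real_sqrt_divide)
  have "(cross ?v ?w)^2 / P > 0" using P(1) D by simp
  then have "x^2 < 1" using x2 by linarith
  then have x: "-1 < x" "x < 1" by (auto simp: abs_square_less_1)
  have va: "vangle a b c = arccos x" by (simp add: vangle_def x_def)
  show "0 < vangle a b c" "vangle a b c < pi" unfolding va using x arccos_lt_bounded by auto
  show "cot (vangle a b c) = (?v \<bullet> ?w) / \<bar>cross ?v ?w\<bar>"
  proof -
    have "cot (arccos x) = x / sqrt (1 - x^2)" using x by (simp add: cot_def sin_arccos)
    then show ?thesis using N unfolding va sq by (simp add: x_def)
  qed
qed

lemma inner_le_cot_cross:
  fixes a b c :: pt
  assumes "\<not> collinear {a, b, c}" and "0 < \<omega>" "\<omega> \<le> vangle a b c"
  shows "(b - a) \<bullet> (c - a) \<le> cot \<omega> * \<bar>cross (b - a) (c - a)\<bar>"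
proof -
  have "cot (vangle a b c) \<le> cot \<omega>"
    using assms vangle_bounds_and_cot(2)[OF assms(1)] by (intro cot_antimono) auto
  then show ?thesis
    using cross_neq_0_if_not_collinear[OF assms(1)] vangle_bounds_and_cot(3)[OF assms(1)]
    by (simp add: divide_le_eq)
qed

lemma cot_triple_bounds:
  fixes X Y Z c :: real
  assumes "X \<le> c" "Y \<le> c" "Z \<le> c" "X*Y + Y*Z + Z*X = 1" "X + Y > 0"
  shows "X + Y \<le> 2 * c" and "1 \<le> (X + Y) * sqrt (1 + c^2)"
proof -
  show "X + Y \<le> 2 * c" using assms(1,2) by simp
  then have c: "c > 0" using assms(5) by simp
  show "1 \<le> (X + Y) * sqrt (1 + c^2)"
  proof (rule ccontr)
    define s where "s = X + Y"
    define R where "R = sqrt (1 + c^2)"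
    assume "\<not> 1 \<le> (X + Y) * sqrt (1 + c^2)"
    then have sR: "s * R < 1" by (simp add: s_def R_def)
    have R: "R > 0" "R^2 = 1 + c^2" by (simp_all add: R_def add_pos_nonneg)
    have s: "s > 0" using assms(5) s_def by simp
    have "X * Y \<le> s^2 / 4"
      using zero_le_power2[of "X - Y"] by (simp add: s_def power2_eq_square field_simps)
    moreover have "Z * s \<le> c * s" using assms(3) s by (simp add: mult_right_mono)
    moreover have "Z * s = 1 - X * Y" using assms(4) by (simp add: s_def algebra_simps)
    ultimately have "4 \<le> s^2 + 4 * c * s" by linarith
    then have "4 * R^2 \<le> (s*R)^2 + 4 * c * R * (s * R)"
      using mult_right_mono[of 4 "s^2 + 4 * c * s" "R^2"] by (simp add: power2_eq_square algebra_simps)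
    moreover have "(s*R)^2 < 1" using sR s R by (simp add: power_less_one_iff abs_square_less_1)
    moreover have "4 * c * R * (s * R) \<le> 4 * c * R" using sR s R c by (simp add: mult_left_le)
    moreover have "4 * c * R \<le> 2 * c^2 + 2 * R^2"
      using zero_le_square[of "c - R"] by (simp add: power2_eq_square algebra_simps)
    ultimately show False using R by linarith
  qed
qed

lemma sin_eq_inverse_sqrt_cot:
  assumes "0 < x" "x < pi"
  shows "sin x = 1 / sqrt (1 + (cot x)^2)"
proof -
  have sin: "sin x > 0" using assms by (rule sin_gt_zero)
  then have "1 + (cot x)^2 = ((sin x)^2 + (cos x)^2) / (sin x)^2"
    by (simp add: cot_def field_simps)
  then have "sqrt (1 + (cot x)^2) = 1 / sin x" using sin by (simp add: real_sqrt_divide)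
  then show ?thesis using sin by simp
qed

text \<open>With X, Y, Z the cotangents of the angles at p, q, r, the edge pq has
  |q - p|^2 = (X + Y) |D| where D = cross (q - p) (r - p), and X Y + Y Z + Z X = 1.
  The angle condition gives X, Y, Z \<le> cot \<omega>.\<close>
lemma edge_sq_bounds_cross:
  fixes p q r :: pt
  assumes nd: "\<not> collinear {p, q, r}" and "0 < \<omega>"
    and "\<omega> \<le> vangle p q r" "\<omega> \<le> vangle q r p" "\<omega> \<le> vangle r p q"
  shows "(norm (q - p))^2 \<le> 2 * cot \<omega> * \<bar>cross (q - p) (r - p)\<bar>"
    and "sin \<omega> * \<bar>cross (q - p) (r - p)\<bar> \<le> (norm (q - p))^2"
proof -
  define D where "D = cross (q - p) (r - p)"
  define c where "c = cot \<omega>"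
  define X where "X = ((q - p) \<bullet> (r - p)) / \<bar>D\<bar>"
  define Y where "Y = ((r - q) \<bullet> (p - q)) / \<bar>D\<bar>"
  define Z where "Z = ((p - r) \<bullet> (q - r)) / \<bar>D\<bar>"
  have nd': "\<not> collinear {q, r, p}" "\<not> collinear {r, p, q}" using nd by (simp_all add: insert_commute)
  have D: "\<bar>D\<bar> > 0" using cross_neq_0_if_not_collinear[OF nd] by (simp add: D_def)
  have XY: "X + Y = (norm (q - p))^2 / \<bar>D\<bar>"
    unfolding X_def Y_def add_divide_distrib[symmetric] inner_edge_identity ..
  have "p \<noteq> q" using nd by auto
  then have XY0: "X + Y > 0" using XY D by simp
  have "X \<le> c" using inner_le_cot_cross[OF nd assms(2,3)] D
    by (simp add: X_def D_def c_def divide_le_eq)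
  moreover have "Y \<le> c" using inner_le_cot_cross[OF nd'(1) assms(2,4)] D cross_rotate(1)[of r q p]
    by (simp add: Y_def D_def c_def divide_le_eq)
  moreover have "Z \<le> c" using inner_le_cot_cross[OF nd'(2) assms(2,5)] D cross_rotate(2)[of p r q]
    by (simp add: Z_def D_def c_def divide_le_eq)
  moreover have "X*Y + Y*Z + Z*X = 1"
    using inner_triangle_identity[of q p r] D
    by (simp add: X_def Y_def Z_def D_def power2_eq_square add_divide_distrib[symmetric])
  moreover note XY0
  ultimately have bounds: "X + Y \<le> 2 * c" "1 \<le> (X + Y) * sqrt (1 + c^2)"
    by (rule cot_triple_bounds)+
  then show "(norm (q - p))^2 \<le> 2 * cot \<omega> * \<bar>cross (q - p) (r - p)\<bar>"
    using XY D by (simp add: c_def D_def divide_le_eq mult.commute mult.left_commute)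
  have "\<omega> < pi" using vangle_bounds_and_cot(2)[OF nd] assms(3) by linarith
  then have "sin \<omega> = 1 / sqrt (1 + c^2)" using assms(2) sin_eq_inverse_sqrt_cot by (simp add: c_def)
  then have "sin \<omega> \<le> X + Y"
    using bounds(2) by (simp add: divide_le_eq mult.commute add_pos_nonneg)
  then show "sin \<omega> * \<bar>cross (q - p) (r - p)\<bar> \<le> (norm (q - p))^2"
    using XY D by (simp add: D_def le_divide_eq)
qed

lemma edge_length_bounds:
  assumes "nondeg K" "min_angle_ge \<omega> K" "0 < \<omega>" "E \<in> set (edges K)"
  shows "(dist (fst E) (snd E))^2 \<le> 4 * cot \<omega> * area K"
    and "2 * sin \<omega> * area K \<le> (dist (fst E) (snd E))^2"
proof -
  obtain z0 z1 z2 where K: "K = (z0, z1, z2)" by (cases K)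
  have nd: "\<not> collinear {z0, z1, z2}" "\<not> collinear {z1, z2, z0}" "\<not> collinear {z2, z0, z1}"
    using assms(1) K by (simp_all add: nondeg_def insert_commute)
  have ang: "\<omega> \<le> vangle z0 z1 z2" "\<omega> \<le> vangle z1 z2 z0" "\<omega> \<le> vangle z2 z0 z1"
    using assms(2) K by (simp_all add: min_angle_ge_def)
  have "dist x y = norm (y - x)" for x y :: pt by (simp add: dist_norm norm_minus_commute)
  moreover have "\<bar>cross (z1 - z0) (z2 - z0)\<bar> = 2 * area K"
    "\<bar>cross (z2 - z1) (z0 - z1)\<bar> = 2 * area K" "\<bar>cross (z0 - z2) (z1 - z2)\<bar> = 2 * area K"
    by (simp_all add: K area_eq_cross cross_rotate)
  moreover note edge_sq_bounds_cross[OF nd(1) assms(3) ang(1,2,3)]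
    edge_sq_bounds_cross[OF nd(2) assms(3) ang(2,3,1)]
    edge_sq_bounds_cross[OF nd(3) assms(3) ang(3,1,2)]
  moreover have "E = (z1, z2) \<or> E = (z2, z0) \<or> E = (z0, z1)" using assms(4) K by (auto simp: edges_def)
  ultimately show "(dist (fst E) (snd E))^2 \<le> 4 * cot \<omega> * area K"
    and "2 * sin \<omega> * area K \<le> (dist (fst E) (snd E))^2"
    by auto
qed

lemma min_angle_lt_pi:
  assumes "nondeg K" "min_angle_ge \<omega> K"
  shows "\<omega> < pi"
proof -
  obtain z0 z1 z2 where K: "K = (z0, z1, z2)" by (cases K)
  then show ?thesis
    using assms vangle_bounds_and_cot(2)[of z0 z1 z2] by (simp add: nondeg_def min_angle_ge_def)
qed

section \<open>Regular triangulations\<close>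

lemma verts_subset_tri_hull: "verts K \<subseteq> tri_hull K"
  unfolding tri_hull_def by (rule hull_subset)

lemma finite_verts [simp]: "finite (verts K)"
  by (cases K) (simp add: verts_def)

lemma has_edge_if_in_edges: "E \<in> set (edges K) \<Longrightarrow> has_edge K E"
  by (cases K) (auto simp: edges_def verts_def has_edge_def)

lemma nondeg_distinct: "nondeg (z0, z1, z2) \<Longrightarrow> z0 \<noteq> z1 \<and> z1 \<noteq> z2 \<and> z0 \<noteq> z2"
  by (auto simp: nondeg_def insert_commute)

lemma edges_eqI:
  assumes "nondeg K" "E1 \<in> set (edges K)" "E2 \<in> set (edges K)" "{fst E1, snd E1} = {fst E2, snd E2}"
  shows "E1 = E2"
  using assms by (cases K) (auto simp: edges_def doubleton_eq_iff dest: nondeg_distinct)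

lemma edge_endpoints_distinct: "nondeg K \<Longrightarrow> E \<in> set (edges K) \<Longrightarrow> fst E \<noteq> snd E"
  by (cases K) (auto simp: edges_def dest: nondeg_distinct)

lemma verts_eq_edge_and_opposite:
  assumes "nondeg K" "has_edge K E" "fst E \<noteq> snd E"
  shows "\<exists>c. verts K = {fst E, snd E, c} \<and> \<not> collinear {fst E, snd E, c}"
proof -
  obtain z0 z1 z2 where K: "K = (z0, z1, z2)" by (cases K)
  have "fst E \<in> {z0, z1, z2}" "snd E \<in> {z0, z1, z2}"
    using assms(2) K by (auto simp: has_edge_def verts_def)
  then obtain c where "{z0, z1, z2} = {fst E, snd E, c}"
    using assms(3) nondeg_distinct[of z0 z1 z2] assms(1) K by (auto simp: insert_commute)
  then show ?thesis using assms(1) K by (auto simp: verts_def nondeg_def)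
qed

lemma card_verts: "nondeg K \<Longrightarrow> card (verts K) = 3"
  by (cases K) (auto simp: verts_def dest: nondeg_distinct)

lemma regular_triangulation_inter:
  assumes "regular_triangulation \<Omega> T" "K \<in> T" "L \<in> T" "K \<noteq> L"
  shows "tri_hull K \<inter> tri_hull L = convex hull (verts K \<inter> verts L)"
    and "card (verts K \<inter> verts L) \<le> 2"
  using assms by (auto simp: regular_triangulation_def)

lemma regular_triangulation_nondeg: "regular_triangulation \<Omega> T \<Longrightarrow> K \<in> T \<Longrightarrow> nondeg K"
  by (auto simp: regular_triangulation_def)

lemma regular_triangulation_finite: "regular_triangulation \<Omega> T \<Longrightarrow> finite T"
  by (simp add: regular_triangulation_def)

lemma tri_hull_not_subset:
  assumes reg: "regular_triangulation \<Omega> T" and "K \<in> T" "L \<in> T" "K \<noteq> L"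
  shows "\<not> tri_hull L \<subseteq> tri_hull K"
proof
  let ?S = "verts K \<inter> verts L"
  assume "tri_hull L \<subseteq> tri_hull K"
  then have "verts L \<subseteq> convex hull ?S"
    using regular_triangulation_inter(1)[OF assms] verts_subset_tri_hull by blast
  moreover have "collinear ?S" using regular_triangulation_inter(2)[OF assms] by (simp add: collinear_small)
  then have "collinear (convex hull ?S)"
    by (metis collinear_affine_hull_collinear collinear_subset convex_hull_subset_affine_hull)
  ultimately have "collinear (verts L)" by (rule collinear_subset[rotated])
  then show False
    using regular_triangulation_nondeg[OF reg \<open>L \<in> T\<close>] by (cases L) (simp add: nondeg_def verts_def)
qed

lemma same_side_triangles_eq:
  assumes reg: "regular_triangulation \<Omega> T" and "X \<in> T" "Y \<in> T"
    and vX: "verts X = {a, b, cX}" and vY: "verts Y = {a, b, cY}" and "a \<noteq> b"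
    and "\<not> collinear {a, b, cY}"
    and "cross (b - a) (cX - a) * cross (b - a) (cY - a) > 0"
  shows "X = Y"
proof (rule ccontr)
  assume "X \<noteq> Y"
  have "{a, b} \<subseteq> verts X \<inter> verts Y" using vX vY by auto
  moreover have "card (verts X \<inter> verts Y) \<le> card {a, b}"
    using regular_triangulation_inter(2)[OF reg \<open>X \<in> T\<close> \<open>Y \<in> T\<close> \<open>X \<noteq> Y\<close>] \<open>a \<noteq> b\<close> by simp
  ultimately have "verts X \<inter> verts Y = {a, b}" by (intro card_seteq[symmetric]) auto
  then have "tri_hull X \<inter> tri_hull Y = closed_segment a b"
    using regular_triangulation_inter(1)[OF reg \<open>X \<in> T\<close> \<open>Y \<in> T\<close> \<open>X \<noteq> Y\<close>]
    by (simp add: segment_convex_hull)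
  moreover obtain x where "x \<in> convex hull {a, b, cX} \<inter> convex hull {a, b, cY}"
    and "cross (b - a) (x - a) \<noteq> 0"
    using common_point_off_line[OF cross_neq_0_if_not_collinear[OF assms(7)] assms(8)] by blast
  then have "x \<in> tri_hull X \<inter> tri_hull Y" "cross (b - a) (x - a) \<noteq> 0"
    by (simp_all add: tri_hull_def vX vY)
  ultimately show False using cross_eq_0_if_in_segment by blast
qed

text \<open>Of three triangles on a common edge, two would have their third vertices on
  the same side of it.\<close>
lemma edge_neighbour_unique:
  assumes reg: "regular_triangulation \<Omega> T" and T: "K \<in> T" "L1 \<in> T" "L2 \<in> T"
    and ne: "K \<noteq> L1" "K \<noteq> L2" and E: "has_edge K E" "has_edge L1 E" "has_edge L2 E"
    and ab: "fst E \<noteq> snd E"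
  shows "L1 = L2"
proof -
  let ?a = "fst E" and ?b = "snd E"
  have opp: "\<exists>c. verts X = {?a, ?b, c} \<and> \<not> collinear {?a, ?b, c}" if "X \<in> T" "has_edge X E" for X
    using verts_eq_edge_and_opposite[OF regular_triangulation_nondeg[OF reg that(1)] that(2) ab] .
  obtain c where c: "verts K = {?a, ?b, c}" "\<not> collinear {?a, ?b, c}"
    using opp[OF T(1) E(1)] by blast
  obtain c1 where c1: "verts L1 = {?a, ?b, c1}" "\<not> collinear {?a, ?b, c1}"
    using opp[OF T(2) E(2)] by blast
  obtain c2 where c2: "verts L2 = {?a, ?b, c2}" "\<not> collinear {?a, ?b, c2}"
    using opp[OF T(3) E(3)] by blast
  consider "cross (?b - ?a) (c - ?a) * cross (?b - ?a) (c1 - ?a) > 0"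
    | "cross (?b - ?a) (c - ?a) * cross (?b - ?a) (c2 - ?a) > 0"
    | "cross (?b - ?a) (c1 - ?a) * cross (?b - ?a) (c2 - ?a) > 0"
    using cross_neq_0_if_not_collinear[OF c(2)] cross_neq_0_if_not_collinear[OF c1(2)]
      cross_neq_0_if_not_collinear[OF c2(2)]
    by (auto simp: zero_less_mult_iff linorder_neq_iff)
  then show ?thesis
  proof cases
    case 1
    then show ?thesis using same_side_triangles_eq[OF reg T(1,2) c(1) c1(1) ab c1(2)] ne(1) by simp
  next
    case 2
    then show ?thesis using same_side_triangles_eq[OF reg T(1,3) c(1) c2(1) ab c2(2)] ne(2) by simp
  next
    case 3
    then show ?thesis using same_side_triangles_eq[OF reg T(2,3) c1(1) c2(1) ab c2(2)] by simp
  qed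
qed

definition neighbour :: "tri set \<Rightarrow> tri \<Rightarrow> pt \<times> pt \<Rightarrow> tri" where
  "neighbour T K E = (THE K'. K' \<in> T \<and> K' \<noteq> K \<and> has_edge K' E)"

lemma neighbour_eqI:
  assumes "regular_triangulation \<Omega> T" "K \<in> T" "E \<in> set (edges K)"
    and L: "L \<in> T" "L \<noteq> K" "has_edge L E"
  shows "neighbour T K E = L"
  unfolding neighbour_def
proof (rule the_equality)
  show "L \<in> T \<and> L \<noteq> K \<and> has_edge L E" using L by blast
  fix L' assume "L' \<in> T \<and> L' \<noteq> K \<and> has_edge L' E"
  then show "L' = L"
    using edge_neighbour_unique[OF assms(1,2) _ L(1) _ _ has_edge_if_in_edges[OF assms(3)] _ L(3)]
      edge_endpoints_distinct[OF regular_triangulation_nondeg[OF assms(1,2)] assms(3)] L(2) by metis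
qed

lemma hull_edge_subset_tri_hull:
  assumes "has_edge K E"
  shows "closed_segment (fst E) (snd E) \<subseteq> tri_hull K"
  using assms hull_mono[of "{fst E, snd E}" "verts K"]
  by (simp add: has_edge_def tri_hull_def segment_convex_hull)

lemma has_edge_if_open_edge_in_tri_hull:
  assumes reg: "regular_triangulation \<Omega> T" and "K \<in> T" "L \<in> T" "K \<noteq> L" and E: "E \<in> set (edges K)"
    and q: "q \<in> open_segment (fst E) (snd E)" "q \<in> tri_hull L"
  shows "has_edge L E"
proof -
  let ?a = "fst E" and ?b = "snd E"
  have "nondeg K" using reg \<open>K \<in> T\<close> by (rule regular_triangulation_nondeg)
  then obtain c where c: "verts K = {?a, ?b, c}" "\<not> collinear {?a, ?b, c}"
    using verts_eq_edge_and_opposite has_edge_if_in_edges[OF E] edge_endpoints_distinct[OF _ E] by blast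
  have "q \<in> tri_hull K"
    using q(1) hull_edge_subset_tri_hull[OF has_edge_if_in_edges[OF E]] segment_open_subset_closed by blast
  then have "q \<in> convex hull (verts K \<inter> verts L)"
    using regular_triangulation_inter(1)[OF reg assms(2-4)] q(2) by blast
  moreover have "verts K \<inter> verts L \<subseteq> {?a, ?b, c}" using c(1) by blast
  ultimately show ?thesis using open_segment_in_hull_imp_ends[OF c(2) _ q(1)] by (auto simp: has_edge_def)
qed

lemma open_edge_meets_domain:
  assumes reg: "regular_triangulation \<Omega> T" and "open \<Omega>" and K: "K \<in> T"
    and E: "E \<in> set (edges K)" and "\<not> boundary_edge \<Omega> E"
  shows "\<exists>q\<in>\<Omega>. q \<in> open_segment (fst E) (snd E)"
proof -
  have "fst E \<noteq> snd E" using edge_endpoints_distinct[OF regular_triangulation_nondeg[OF reg K] E] .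
  moreover have "closed_segment (fst E) (snd E) \<subseteq> closure \<Omega>"
    using hull_edge_subset_tri_hull[OF has_edge_if_in_edges[OF E]] reg K
    by (auto simp: regular_triangulation_def)
  moreover obtain p where "p \<in> closed_segment (fst E) (snd E)" "p \<notin> frontier \<Omega>"
    using assms(5) by (auto simp: boundary_edge_def)
  ultimately have "p \<in> \<Omega> \<inter> closure (open_segment (fst E) (snd E))"
    using \<open>open \<Omega>\<close> by (auto simp: frontier_def interior_open)
  then show ?thesis using open_Int_closure_eq_empty[OF \<open>open \<Omega>\<close>] by blast
qed

text \<open>Pick q \<in> \<Omega> on the open edge. The points q + t (q - c), t > 0, lie beyond the edge,
  outside K, and for small t in \<Omega>; so q is a limit of points of the closed set covered
  by the other triangles.\<close>
lemma interior_edge_has_neighbour: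
  assumes reg: "regular_triangulation \<Omega> T" and "open \<Omega>" and K: "K \<in> T"
    and E: "E \<in> set (edges K)" and "\<not> boundary_edge \<Omega> E"
  shows "\<exists>L\<in>T. L \<noteq> K \<and> has_edge L E"
proof -
  let ?a = "fst E" and ?b = "snd E"
  obtain q where q: "q \<in> \<Omega>" "q \<in> open_segment ?a ?b" using open_edge_meets_domain[OF assms] by blast
  have "nondeg K" using reg K by (rule regular_triangulation_nondeg)
  then obtain c where c: "verts K = {?a, ?b, c}" "\<not> collinear {?a, ?b, c}"
    using verts_eq_edge_and_opposite has_edge_if_in_edges[OF E] edge_endpoints_distinct[OF _ E] by blast
  define y where "y t = q + t *\<^sub>R (q - c)" for t :: real
  have outside: "y t \<notin> tri_hull K" if "t > 0" for t
    using beyond_edge_notin_hull[OF c(2) _ that] q(2) segment_open_subset_closed c(1)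
    by (auto simp: y_def tri_hull_def)
  have lim: "(y \<longlongrightarrow> q) (at_right 0)"
    unfolding y_def by (auto intro!: tendsto_eq_intros)
  then have "\<forall>\<^sub>F t in at_right 0. y t \<in> \<Omega>"
    using \<open>open \<Omega>\<close> q(1) by (rule topological_tendstoD)
  then have "\<forall>\<^sub>F t in at_right 0. y t \<in> \<Omega> \<and> 0 < t"
    using eventually_at_right_less[of 0] by (rule eventually_conj)
  moreover have "\<Omega> \<subseteq> \<Union>(tri_hull ` T)"
    using reg closure_subset by (auto simp: regular_triangulation_def)
  ultimately have "\<forall>\<^sub>F t in at_right 0. y t \<in> \<Union>(tri_hull ` (T - {K}))"
    by (elim eventually_mono) (use outside in blast)
  moreover have "closed (\<Union>(tri_hull ` (T - {K})))"
    using regular_triangulation_finite[OF reg]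
    by (intro closed_Union) (auto simp: tri_hull_def intro!: compact_imp_closed finite_imp_compact_convex_hull)
  ultimately have "q \<in> \<Union>(tri_hull ` (T - {K}))"
    using lim by (intro Lim_in_closed_set) auto
  then obtain L where L: "L \<in> T" "L \<noteq> K" "q \<in> tri_hull L" by blast
  then show ?thesis
    using has_edge_if_open_edge_in_tri_hull[OF reg K L(1) L(2)[symmetric] E q(2) L(3)] by blast
qed

section \<open>Newest-vertex refinement\<close>

lemma bisect_subset: "L \<in> bisect K \<Longrightarrow> tri_hull L \<subseteq> tri_hull K"
proof -
  assume L: "L \<in> bisect K"
  obtain z0 z1 z2 where K: "K = (z0, z1, z2)" by (cases K)
  have "midpoint z1 z2 \<in> convex hull {z1, z2}"
    using midpoint_in_closed_segment[of z1 z2] by (simp add: segment_convex_hull)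
  then have "midpoint z1 z2 \<in> convex hull {z0, z1, z2}"
    using hull_mono[of "{z1, z2}" "{z0, z1, z2}"] by auto
  moreover have "{z0, z1, z2} \<subseteq> convex hull {z0, z1, z2}" by (rule hull_subset)
  ultimately have "verts L \<subseteq> tri_hull K"
    using L by (auto simp: K bisect_def verts_def tri_hull_def midpoint_def Let_def)
  then show ?thesis by (simp add: tri_hull_def[of L] tri_hull_def[of K] convex_hull_subset)
qed

lemma refinement_subset:
  assumes "nvb_step\<^sup>*\<^sup>* T Th" "L \<in> Th"
  shows "\<exists>K\<in>T. tri_hull L \<subseteq> tri_hull K"
  using assms
proof (induction arbitrary: L rule: rtranclp_induct)
  case (step T1 T2)
  then obtain K where "K \<in> T1" "T2 = (T1 - {K}) \<union> bisect K" by (auto simp: nvb_step_def)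
  then show ?case using step bisect_subset by blast
qed blast

lemma coarse_triangle_has_edge:
  assumes regT: "regular_triangulation \<Omega> T" and regTh: "regular_triangulation \<Omega> Th"
    and K: "K \<in> T" "K \<in> Th" and E: "E \<in> set (edges K)"
    and L: "L \<in> Th" "L \<noteq> K" "has_edge L E" and K': "K' \<in> T" "tri_hull L \<subseteq> tri_hull K'"
  shows "K' \<noteq> K \<and> has_edge K' E"
proof
  show "K' \<noteq> K" using tri_hull_not_subset[OF regTh K(2) L(1) L(2)[symmetric]] K'(2) by blast
  have "fst E \<noteq> snd E" using edge_endpoints_distinct[OF regular_triangulation_nondeg[OF regT K(1)] E] .
  then have m: "midpoint (fst E) (snd E) \<in> open_segment (fst E) (snd E)" by simp
  then have "midpoint (fst E) (snd E) \<in> tri_hull K'"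
    using hull_edge_subset_tri_hull[OF L(3)] K'(2) segment_open_subset_closed by blast
  then show "has_edge K' E"
    using has_edge_if_open_edge_in_tri_hull[OF regT K(1) K'(1) _ E m] \<open>K' \<noteq> K\<close> by blast
qed

lemma neighbours_nested:
  assumes regT: "regular_triangulation \<Omega> T" and regTh: "regular_triangulation \<Omega> Th"
    and "open \<Omega>" and "nvb_step\<^sup>*\<^sup>* T Th"
    and K: "K \<in> T" "K \<in> Th" and E: "E \<in> set (edges K)" and "\<not> boundary_edge \<Omega> E"
  shows "neighbour Th K E \<in> Th" "neighbour Th K E \<noteq> K" "has_edge (neighbour Th K E) E"
    and "neighbour T K E \<in> T" "tri_hull (neighbour Th K E) \<subseteq> tri_hull (neighbour T K E)"
proof -
  obtain L where L: "L \<in> Th" "L \<noteq> K" "has_edge L E"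
    using interior_edge_has_neighbour[OF regTh assms(3) K(2) E assms(8)] by blast
  then have nL: "neighbour Th K E = L" by (rule neighbour_eqI[OF regTh K(2) E])
  obtain K' where K': "K' \<in> T" "tri_hull L \<subseteq> tri_hull K'"
    using refinement_subset[OF assms(4) L(1)] by blast
  then have "neighbour T K E = K'"
    using neighbour_eqI[OF regT K(1) E] coarse_triangle_has_edge[OF regT regTh K E L K'] by blast
  then show "neighbour Th K E \<in> Th" "neighbour Th K E \<noteq> K" "has_edge (neighbour Th K E) E"
    and "neighbour T K E \<in> T" "tri_hull (neighbour Th K E) \<subseteq> tri_hull (neighbour T K E)"
    using L K' nL by simp_all
qed

lemma L2_set_diff_le: "\<bar>L2_set x I - L2_set y I\<bar> \<le> L2_set (\<lambda>i. x i - y i) I"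
proof -
  have "L2_set x I \<le> L2_set y I + L2_set (\<lambda>i. x i - y i) I"
    using L2_set_triangle_ineq[of y "\<lambda>i. x i - y i" I] by simp
  moreover have "L2_set y I \<le> L2_set x I + L2_set (\<lambda>i. y i - x i) I"
    using L2_set_triangle_ineq[of x "\<lambda>i. y i - x i" I] by simp
  moreover have "L2_set (\<lambda>i. y i - x i) I = L2_set (\<lambda>i. x i - y i) I"
    unfolding L2_set_def by (simp add: power2_commute)
  ultimately show ?thesis by linarith
qed

lemma sqrt_add_sum_sq_diff_le:
  fixes x y :: "'i \<Rightarrow> real"
  assumes "0 \<le> S"
  shows "\<bar>sqrt (S + (\<Sum>i\<in>I. (x i)^2)) - sqrt (S + (\<Sum>i\<in>I. (y i)^2))\<bar> \<le> sqrt (\<Sum>i\<in>I. (x i - y i)^2)"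
proof -
  have pair: "sqrt (S + (\<Sum>i\<in>I. (z i)^2)) = norm (sqrt S, L2_set z I)" for z :: "'i \<Rightarrow> real"
    using assms by (simp add: norm_Pair L2_set_def sum_nonneg)
  have "\<bar>norm (sqrt S, L2_set x I) - norm (sqrt S, L2_set y I)\<bar> \<le> norm ((0::real), L2_set x I - L2_set y I)"
    using norm_triangle_ineq3[of "(sqrt S, L2_set x I)" "(sqrt S, L2_set y I)"] by simp
  also have "\<dots> \<le> L2_set (\<lambda>i. x i - y i) I" using L2_set_diff_le by (simp add: norm_Pair)
  finally show ?thesis unfolding pair by (simp add: L2_set_def)
qed

lemma sum_comp_le_card_fibres:
  fixes g :: "'b \<Rightarrow> real"
  assumes "finite P" "finite Y" "\<phi> ` P \<subseteq> Y"
    and "\<And>y. y \<in> Y \<Longrightarrow> card {p \<in> P. \<phi> p = y} \<le> k" and "\<And>y. y \<in> Y \<Longrightarrow> 0 \<le> g y"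
  shows "(\<Sum>p\<in>P. g (\<phi> p)) \<le> k * (\<Sum>y\<in>Y. g y)"
proof -
  have "(\<Sum>p\<in>P. g (\<phi> p)) = (\<Sum>y\<in>\<phi> ` P. real (card {p \<in> P. \<phi> p = y}) * g y)"
    using sum.image_gen[OF assms(1), of "\<lambda>p. g (\<phi> p)" \<phi>] by simp
  also have "\<dots> \<le> (\<Sum>y\<in>\<phi> ` P. k * g y)"
    using assms(3-5) by (intro sum_mono mult_right_mono) auto
  also have "\<dots> \<le> (\<Sum>y\<in>Y. k * g y)"
    using assms by (intro sum_mono2) (auto intro: mult_nonneg_nonneg order_trans[OF _ assms(4)])
  finally show ?thesis by (simp add: sum_distrib_left)
qed

section \<open>The estimator\<close>

definition tangent :: "pt \<times> pt \<Rightarrow> pt" where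
  "tangent E = (1 / dist (fst E) (snd E)) *\<^sub>R (snd E - fst E)"

text \<open>The jump [\<partial>u/\<partial>s]_E of the paper (the trace on a boundary edge) is
  jump_grad \<Omega> T u K E \<bullet> tangent E.\<close>
definition jump_grad :: "pt set \<Rightarrow> tri set \<Rightarrow> pw_affine \<Rightarrow> tri \<Rightarrow> pt \<times> pt \<Rightarrow> pt" where
  "jump_grad \<Omega> T u K E =
     (if boundary_edge \<Omega> E then fst (u K) else fst (u K) - fst (u (neighbour T K E)))"

definition edge_pairs :: "tri set \<Rightarrow> (tri \<times> (pt \<times> pt)) set" where
  "edge_pairs M = Sigma M (\<lambda>K. set (edges K))"

definition edge_weight :: "tri \<Rightarrow> pt \<times> pt \<Rightarrow> real" where
  "edge_weight K E = sqrt (area K) * dist (fst E) (snd E)"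

lemma norm_tangent: "fst E \<noteq> snd E \<Longrightarrow> norm (tangent E) = 1"
  by (simp add: tangent_def dist_norm norm_minus_commute)

lemma tjump2_eq_jump_grad: "tjump2 \<Omega> T u K E = dist (fst E) (snd E) * (jump_grad \<Omega> T u K E \<bullet> tangent E)^2"
  by (simp add: tjump2_def jump_grad_def tangent_def neighbour_def Let_def inner_diff_left)

lemma nondeg_imp_distinct_edges: "nondeg K \<Longrightarrow> distinct (edges K)"
  by (cases K) (auto simp: edges_def dest: nondeg_distinct)

lemma eta_eq_sqrt_sum:
  assumes "finite M" "\<And>K. K \<in> M \<Longrightarrow> nondeg K"
  shows "eta \<Omega> T f u M = sqrt ((\<Sum>K\<in>M. area K * (LINT x:tri_hull K|lebesgue. (f x)^2))
    + (\<Sum>(K, E)\<in>edge_pairs M. (sqrt (edge_weight K E) * (jump_grad \<Omega> T u K E \<bullet> tangent E))^2))"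
proof -
  have "sqrt (area K) * (\<Sum>E\<leftarrow>edges K. tjump2 \<Omega> T u K E)
      = (\<Sum>E\<in>set (edges K). (sqrt (edge_weight K E) * (jump_grad \<Omega> T u K E \<bullet> tangent E))^2)"
    if "K \<in> M" for K
    using nondeg_imp_distinct_edges[OF assms(2)[OF that]]
    by (simp add: sum_list_distinct_conv_sum_set sum_distrib_left tjump2_eq_jump_grad edge_weight_def
        power_mult_distrib mult.assoc area_def)
  then show ?thesis
    using assms(1) by (simp add: eta_def eta2_def sum.distrib edge_pairs_def sum.Sigma)
qed

lemma estimator_diff_le:
  assumes "finite M" "\<And>K. K \<in> M \<Longrightarrow> nondeg K"
  shows "\<bar>eta \<Omega> T f u M - eta \<Omega> Th f uh M\<bar>
    \<le> sqrt (\<Sum>(K, E)\<in>edge_pairs M. edge_weight K E * ((jump_grad \<Omega> T u K E - jump_grad \<Omega> Th uh K E) \<bullet> tangent E)^2)"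
proof -
  have "0 \<le> area K * (LINT x:tri_hull K|lebesgue. (f x)^2)" for K
    unfolding set_lebesgue_integral_def area_def
    by (intro mult_nonneg_nonneg measure_nonneg integral_nonneg_AE) (auto simp: indicator_def)
  then have "0 \<le> (\<Sum>K\<in>M. area K * (LINT x:tri_hull K|lebesgue. (f x)^2))" by (simp add: sum_nonneg)
  from sqrt_add_sum_sq_diff_le[OF this, of
      "\<lambda>(K, E). sqrt (edge_weight K E) * (jump_grad \<Omega> T u K E \<bullet> tangent E)"
      "edge_pairs M" "\<lambda>(K, E). sqrt (edge_weight K E) * (jump_grad \<Omega> Th uh K E \<bullet> tangent E)"]
  show ?thesis
    by (simp add: eta_eq_sqrt_sum[OF assms] case_prod_beta edge_weight_def area_def power_mult_distrib
        inner_diff_left right_diff_distrib[symmetric])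
qed

definition shape_const :: "real \<Rightarrow> real" where
  "shape_const \<omega> = 4 * cot \<omega> / sqrt (2 * sin \<omega>)"

lemma cot_pos_if_min_angle:
  assumes "nondeg K" "min_angle_ge \<omega> K" "0 < \<omega>"
  shows "0 < cot \<omega>"
proof -
  obtain z0 z1 z2 where K: "K = (z0, z1, z2)" by (cases K)
  then have e: "(z1, z2) \<in> set (edges K)" and "z1 \<noteq> z2"
    using assms(1) by (auto simp: edges_def dest: nondeg_distinct)
  then have "0 < (dist z1 z2)^2" by simp
  moreover have "(dist z1 z2)^2 \<le> 4 * cot \<omega> * area K" using edge_length_bounds(1)[OF assms e] by simp
  ultimately have "0 < 4 * cot \<omega> * area K" by linarith
  then show ?thesis by (simp add: zero_less_mult_iff area_def)
qed

lemma edge_weight_le: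
  assumes "nondeg K" "min_angle_ge \<omega> K" "0 < \<omega>" "E \<in> set (edges K)"
    and "(dist (fst E) (snd E))^2 \<le> 4 * cot \<omega> * A"
  shows "edge_weight K E \<le> shape_const \<omega> * A"
proof -
  let ?d = "dist (fst E) (snd E)"
  have "0 < sin \<omega>" using assms(3) min_angle_lt_pi[OF assms(1,2)] by (simp add: sin_gt_zero)
  then have s: "0 < sqrt (2 * sin \<omega>)" by simp
  have "sqrt (area K) * sqrt (2 * sin \<omega>) = sqrt (2 * sin \<omega> * area K)"
    by (simp add: real_sqrt_mult mult.commute)
  also have "\<dots> \<le> sqrt (?d^2)" using edge_length_bounds(2)[OF assms(1-4)] by (rule real_sqrt_le_mono)
  also have "\<dots> = ?d" by simp
  finally have "sqrt (area K) * sqrt (2 * sin \<omega>) \<le> ?d" .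
  from mult_right_mono[OF this zero_le_dist[of "fst E" "snd E"]]
  have "sqrt (area K) * ?d * sqrt (2 * sin \<omega>) \<le> ?d * ?d" by (simp add: mult_ac)
  then have "edge_weight K E \<le> ?d^2 / sqrt (2 * sin \<omega>)"
    using s by (simp add: edge_weight_def le_divide_eq power2_eq_square)
  also have "\<dots> \<le> shape_const \<omega> * A"
    using assms(5) s by (simp add: shape_const_def divide_right_mono)
  finally show ?thesis .
qed

lemma shape_const_pos:
  assumes "nondeg K" "min_angle_ge \<omega> K" "0 < \<omega>"
  shows "0 < shape_const \<omega>"
  using cot_pos_if_min_angle[OF assms] assms(3) min_angle_lt_pi[OF assms(1,2)]
  by (simp add: shape_const_def sin_gt_zero)

lemma has_edge_length_le:
  assumes "nondeg L" "min_angle_ge \<omega> L" "0 < \<omega>" "has_edge L E" "fst E \<noteq> snd E"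
  shows "(dist (fst E) (snd E))^2 \<le> 4 * cot \<omega> * area L"
proof -
  obtain z0 z1 z2 where L: "L = (z0, z1, z2)" by (cases L)
  have "fst E \<in> {z0, z1, z2}" "snd E \<in> {z0, z1, z2}" using assms(4) L by (auto simp: has_edge_def verts_def)
  then have "\<exists>E'\<in>set (edges L). {fst E', snd E'} = {fst E, snd E}"
    using assms(5) L by (auto simp: edges_def insert_commute)
  then obtain E' where "E' \<in> set (edges L)" "{fst E', snd E'} = {fst E, snd E}" by blast
  moreover from this(2) have "dist (fst E') (snd E') = dist (fst E) (snd E)"
    by (auto simp: doubleton_eq_iff dist_commute)
  ultimately show ?thesis using edge_length_bounds(1)[OF assms(1-3)] by metis
qed

definition grad_gap :: "pw_affine \<Rightarrow> pw_affine \<Rightarrow> tri \<Rightarrow> tri \<Rightarrow> real" where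
  "grad_gap u uh K L = measure lebesgue (tri_hull K \<inter> tri_hull L) * (norm (fst (u K) - fst (uh L)))^2"

lemma grad_gap_nonneg: "0 \<le> grad_gap u uh K L"
  by (simp add: grad_gap_def)

lemma nc_dist_eq: "nc_dist T u Th uh = sqrt (\<Sum>(K, L)\<in>T \<times> Th. grad_gap u uh K L)"
  by (simp add: nc_dist_def grad_gap_def sum.cartesian_product)

lemma card_edge_pairs_fibre_le: "card {p \<in> edge_pairs M. fst p = K} \<le> 3"
proof -
  have "{p \<in> edge_pairs M. fst p = K} \<subseteq> {K} \<times> set (edges K)" by (auto simp: edge_pairs_def)
  then have "card {p \<in> edge_pairs M. fst p = K} \<le> card ({K} \<times> set (edges K))"
    by (intro card_mono) auto
  also have "\<dots> = card (set (edges K))" by (simp add: card_cartesian_product_singleton)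
  also have "\<dots> \<le> length (edges K)" by (rule card_length)
  also have "\<dots> = 3" by (cases K) (simp add: edges_def)
  finally show ?thesis .
qed

section \<open>Estimator reduction\<close>

locale nested_triangulations =
  fixes \<Omega> :: "pt set" and T Th :: "tri set" and \<omega> :: real
  assumes open_domain: "open \<Omega>"
    and regular_coarse: "regular_triangulation \<Omega> T"
    and regular_fine: "regular_triangulation \<Omega> Th"
    and refines: "nvb_step\<^sup>*\<^sup>* T Th"
    and angle_pos: "0 < \<omega>"
    and min_angle: "\<And>K. K \<in> T \<union> Th \<Longrightarrow> min_angle_ge \<omega> K"
begin

abbreviation interior_edge_pairs :: "(tri \<times> (pt \<times> pt)) set" where
  "interior_edge_pairs \<equiv> {p \<in> edge_pairs (T \<inter> Th). \<not> boundary_edge \<Omega> (snd p)}"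

lemma triangles_nondeg: "K \<in> T \<union> Th \<Longrightarrow> nondeg K"
  using regular_triangulation_nondeg regular_coarse regular_fine by blast

lemma interior_edge_neighbours:
  assumes "p \<in> interior_edge_pairs"
  shows "neighbour Th (fst p) (snd p) \<in> Th" "neighbour Th (fst p) (snd p) \<noteq> fst p"
    "has_edge (neighbour Th (fst p) (snd p)) (snd p)" "neighbour T (fst p) (snd p) \<in> T"
    "tri_hull (neighbour Th (fst p) (snd p)) \<subseteq> tri_hull (neighbour T (fst p) (snd p))"
proof -
  have "fst p \<in> T" "fst p \<in> Th" "snd p \<in> set (edges (fst p))" "\<not> boundary_edge \<Omega> (snd p)"
    using assms by (auto simp: edge_pairs_def)
  from neighbours_nested[OF regular_coarse regular_fine open_domain refines this]
  show "neighbour Th (fst p) (snd p) \<in> Th" "neighbour Th (fst p) (snd p) \<noteq> fst p"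
    "has_edge (neighbour Th (fst p) (snd p)) (snd p)" "neighbour T (fst p) (snd p) \<in> T"
    "tri_hull (neighbour Th (fst p) (snd p)) \<subseteq> tri_hull (neighbour T (fst p) (snd p))" .
qed

definition neighbour_gap :: "pw_affine \<Rightarrow> pw_affine \<Rightarrow> tri \<Rightarrow> pt \<times> pt \<Rightarrow> real" where
  "neighbour_gap u uh K E =
     (if boundary_edge \<Omega> E then 0 else grad_gap u uh (neighbour T K E) (neighbour Th K E))"

lemma edge_weight_grad_gap_le:
  assumes K: "K \<in> T \<inter> Th" and E: "E \<in> set (edges K)"
  shows "edge_weight K E * (norm (fst (u K) - fst (uh K)))^2 \<le> shape_const \<omega> * grad_gap u uh K K"
    and "\<not> boundary_edge \<Omega> E \<Longrightarrow>
      edge_weight K E * (norm (fst (u (neighbour T K E)) - fst (uh (neighbour Th K E))))^2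
      \<le> shape_const \<omega> * grad_gap u uh (neighbour T K E) (neighbour Th K E)"
proof -
  have ndK: "nondeg K" and angK: "min_angle_ge \<omega> K" using K triangles_nondeg min_angle by auto
  have "edge_weight K E \<le> shape_const \<omega> * area K"
    using edge_weight_le[OF ndK angK angle_pos E edge_length_bounds(1)[OF ndK angK angle_pos E]] .
  from mult_right_mono[OF this zero_le_power2[of "norm (fst (u K) - fst (uh K))"]]
  show "edge_weight K E * (norm (fst (u K) - fst (uh K)))^2 \<le> shape_const \<omega> * grad_gap u uh K K"
    by (simp add: grad_gap_def area_def mult_ac)
  assume "\<not> boundary_edge \<Omega> E"
  then have "(K, E) \<in> interior_edge_pairs" using K E by (simp add: edge_pairs_def)
  note nb = interior_edge_neighbours[OF this, simplified]
  have "edge_weight K E \<le> shape_const \<omega> * area (neighbour Th K E)"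
    using nb(1) edge_weight_le[OF ndK angK angle_pos E]
      has_edge_length_le[OF triangles_nondeg min_angle angle_pos nb(3) edge_endpoints_distinct[OF ndK E]]
    by simp
  from mult_right_mono[OF this zero_le_power2[of "norm (fst (u (neighbour T K E)) - fst (uh (neighbour Th K E)))"]]
  show "edge_weight K E * (norm (fst (u (neighbour T K E)) - fst (uh (neighbour Th K E))))^2
      \<le> shape_const \<omega> * grad_gap u uh (neighbour T K E) (neighbour Th K E)"
    using nb(5) by (simp add: grad_gap_def area_def Int_absorb1 mult_ac)
qed

lemma jump_diff_sq_le:
  assumes K: "K \<in> T \<inter> Th" and E: "E \<in> set (edges K)"
  shows "edge_weight K E * ((jump_grad \<Omega> T u K E - jump_grad \<Omega> Th uh K E) \<bullet> tangent E)^2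
    \<le> 2 * shape_const \<omega> * (grad_gap u uh K K + neighbour_gap u uh K E)"
proof -
  define g where "g = fst (u K) - fst (uh K)"
  define g' where "g' = (if boundary_edge \<Omega> E then 0
                         else fst (u (neighbour T K E)) - fst (uh (neighbour Th K E)))"
  have wL: "edge_weight K E * (norm g')^2 \<le> shape_const \<omega> * neighbour_gap u uh K E"
    using edge_weight_grad_gap_le(2)[OF K E] by (simp add: g'_def neighbour_gap_def)
  have wK: "edge_weight K E * (norm g)^2 \<le> shape_const \<omega> * grad_gap u uh K K"
    using edge_weight_grad_gap_le(1)[OF K E] by (simp add: g_def)
  have "fst E \<noteq> snd E" using edge_endpoints_distinct[OF triangles_nondeg E] K by auto
  then have "((g - g') \<bullet> tangent E)^2 \<le> 2 * (norm g)^2 + 2 * (norm g')^2"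
    by (intro inner_unit_diff_sq_le norm_tangent)
  moreover have "jump_grad \<Omega> T u K E - jump_grad \<Omega> Th uh K E = g - g'"
    by (simp add: jump_grad_def g_def g'_def)
  ultimately have "edge_weight K E * ((jump_grad \<Omega> T u K E - jump_grad \<Omega> Th uh K E) \<bullet> tangent E)^2
      \<le> edge_weight K E * (2 * (norm g)^2 + 2 * (norm g')^2)"
    by (simp add: mult_left_mono edge_weight_def area_def)
  also have "\<dots> \<le> 2 * shape_const \<omega> * (grad_gap u uh K K + neighbour_gap u uh K E)"
    using wK wL by (simp add: algebra_simps)
  finally show ?thesis .
qed

lemma shape_const_nonneg: "0 \<le> shape_const \<omega>"
proof -
  obtain K where "K \<in> T" using regular_coarse by (auto simp: regular_triangulation_def)
  then show ?thesis using shape_const_pos[OF triangles_nondeg[of K] min_angle[of K] angle_pos] by simp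
qed

lemma finite_edge_pairs: "finite (edge_pairs (T \<inter> Th))"
  using regular_triangulation_finite[OF regular_coarse] by (simp add: edge_pairs_def)

text \<open>Both triangles carrying an edge of the fine neighbour L are neighbours of L, hence
  equal by uniqueness of the neighbour across an edge.\<close>
lemma interior_edge_pairs_eqI:
  assumes p1: "p1 \<in> interior_edge_pairs" and p2: "p2 \<in> interior_edge_pairs"
    and L: "neighbour Th (fst p1) (snd p1) = L" "neighbour Th (fst p2) (snd p2) = L"
    and ends: "{fst (snd p1), snd (snd p1)} = {fst (snd p2), snd (snd p2)}"
  shows "p1 = p2"
proof -
  have K: "fst p1 \<in> T \<inter> Th" "fst p2 \<in> T \<inter> Th"
    and E: "snd p1 \<in> set (edges (fst p1))" "snd p2 \<in> set (edges (fst p2))"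
    using p1 p2 by (auto simp: edge_pairs_def)
  have "has_edge (fst p2) (snd p1)" using has_edge_if_in_edges[OF E(2)] ends by (simp add: has_edge_def)
  then have K12: "fst p1 = fst p2"
    using edge_neighbour_unique[OF regular_fine, of L "fst p1" "fst p2" "snd p1"]
      interior_edge_neighbours[OF p1] interior_edge_neighbours[OF p2] L K has_edge_if_in_edges[OF E(1)]
      edge_endpoints_distinct[OF triangles_nondeg E(1)]
    by auto
  moreover have "snd p1 = snd p2"
    using edges_eqI[OF triangles_nondeg _ E(2) ends] E(1) K(2) K12 by auto
  ultimately show ?thesis by (simp add: prod_eq_iff)
qed

lemma card_neighbour_fibre_le:
  assumes L: "L \<in> Th"
  shows "card {p \<in> interior_edge_pairs. neighbour Th (fst p) (snd p) = L} \<le> 3"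
proof -
  let ?F = "{p \<in> interior_edge_pairs. neighbour Th (fst p) (snd p) = L}"
  let ?ends = "\<lambda>p. {fst (snd p), snd (snd p)}"
  have "inj_on ?ends ?F"
  proof (rule inj_onI)
    fix p1 p2 assume "p1 \<in> ?F" "p2 \<in> ?F" "?ends p1 = ?ends p2"
    then show "p1 = p2" by (intro interior_edge_pairs_eqI[of p1 p2 L]) auto
  qed
  moreover have "?ends p \<subseteq> verts L \<and> card (?ends p) = 2" if "p \<in> ?F" for p
  proof
    show "?ends p \<subseteq> verts L" using that interior_edge_neighbours(3)[of p] by (auto simp: has_edge_def)
    have "fst p \<in> T \<union> Th" "snd p \<in> set (edges (fst p))" using that by (auto simp: edge_pairs_def)
    then have "fst (snd p) \<noteq> snd (snd p)" by (rule edge_endpoints_distinct[OF triangles_nondeg])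
    then show "card (?ends p) = 2" by simp
  qed
  then have "?ends ` ?F \<subseteq> {B. B \<subseteq> verts L \<and> card B = 2}" by blast
  ultimately have "card ?F \<le> card {B. B \<subseteq> verts L \<and> card B = 2}"
    by (intro card_inj_on_le) auto
  also have "\<dots> = 3" using card_verts[OF triangles_nondeg] L by (simp add: n_subsets numeral_eq_Suc)
  finally show ?thesis .
qed

lemma sum_diagonal_gap_le:
  "(\<Sum>p\<in>edge_pairs (T \<inter> Th). grad_gap u uh (fst p) (fst p)) \<le> 3 * (\<Sum>(K, L)\<in>T \<times> Th. grad_gap u uh K L)"
proof -
  let ?P = "edge_pairs (T \<inter> Th)"
  have "card {p \<in> ?P. (fst p, fst p) = y} \<le> 3" for y
  proof -
    have "card {p \<in> ?P. (fst p, fst p) = y} \<le> card {p \<in> ?P. fst p = fst y}"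
      by (rule card_mono) (use finite_edge_pairs in auto)
    also have "\<dots> \<le> 3" by (rule card_edge_pairs_fibre_le)
    finally show ?thesis .
  qed
  then have "(\<Sum>p\<in>?P. case_prod (grad_gap u uh) (fst p, fst p)) \<le> real 3 * (\<Sum>(K, L)\<in>T \<times> Th. grad_gap u uh K L)"
    using finite_edge_pairs regular_triangulation_finite[OF regular_coarse] regular_triangulation_finite[OF regular_fine]
    by (intro sum_comp_le_card_fibres) (auto simp: edge_pairs_def grad_gap_nonneg)
  then show ?thesis by simp
qed

lemma sum_neighbour_gap_le:
  "(\<Sum>p\<in>edge_pairs (T \<inter> Th). neighbour_gap u uh (fst p) (snd p)) \<le> 3 * (\<Sum>(K, L)\<in>T \<times> Th. grad_gap u uh K L)"
proof -
  let ?nb = "\<lambda>p. (neighbour T (fst p) (snd p), neighbour Th (fst p) (snd p))"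
  have "card {p \<in> interior_edge_pairs. ?nb p = y} \<le> 3" if "y \<in> T \<times> Th" for y
  proof -
    have "card {p \<in> interior_edge_pairs. ?nb p = y}
        \<le> card {p \<in> interior_edge_pairs. neighbour Th (fst p) (snd p) = snd y}"
      by (rule card_mono) (use finite_edge_pairs in auto)
    also have "\<dots> \<le> 3" using that by (intro card_neighbour_fibre_le) auto
    finally show ?thesis .
  qed
  then have "(\<Sum>p\<in>interior_edge_pairs. case_prod (grad_gap u uh) (?nb p))
      \<le> real 3 * (\<Sum>(K, L)\<in>T \<times> Th. grad_gap u uh K L)"
    using interior_edge_neighbours(1,4) finite_edge_pairs
      regular_triangulation_finite[OF regular_coarse] regular_triangulation_finite[OF regular_fine]
    by (intro sum_comp_le_card_fibres) (auto simp: grad_gap_nonneg)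
  moreover have "(\<Sum>p\<in>edge_pairs (T \<inter> Th). neighbour_gap u uh (fst p) (snd p))
      = (\<Sum>p\<in>interior_edge_pairs. case_prod (grad_gap u uh) (?nb p))"
    unfolding sum.inter_filter[OF finite_edge_pairs] by (rule sum.cong) (auto simp: neighbour_gap_def)
  ultimately show ?thesis by simp
qed

lemma jump_diff_sum_le:
  "(\<Sum>(K, E)\<in>edge_pairs (T \<inter> Th). edge_weight K E * ((jump_grad \<Omega> T u K E - jump_grad \<Omega> Th uh K E) \<bullet> tangent E)^2)
    \<le> 12 * shape_const \<omega> * (\<Sum>(K, L)\<in>T \<times> Th. grad_gap u uh K L)"
proof -
  let ?P = "edge_pairs (T \<inter> Th)" and ?N = "\<Sum>(K, L)\<in>T \<times> Th. grad_gap u uh K L"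
  have "(\<Sum>(K, E)\<in>?P. edge_weight K E * ((jump_grad \<Omega> T u K E - jump_grad \<Omega> Th uh K E) \<bullet> tangent E)^2)
      \<le> (\<Sum>p\<in>?P. 2 * shape_const \<omega> * (grad_gap u uh (fst p) (fst p) + neighbour_gap u uh (fst p) (snd p)))"
    unfolding case_prod_beta by (rule sum_mono) (auto simp: edge_pairs_def intro: jump_diff_sq_le)
  also have "\<dots> = 2 * shape_const \<omega> * ((\<Sum>p\<in>?P. grad_gap u uh (fst p) (fst p))
      + (\<Sum>p\<in>?P. neighbour_gap u uh (fst p) (snd p)))"
    unfolding sum_distrib_left[symmetric] sum.distrib ..
  also have "\<dots> \<le> 2 * shape_const \<omega> * (3 * ?N + 3 * ?N)"
    using sum_diagonal_gap_le sum_neighbour_gap_le shape_const_nonneg by (intro mult_left_mono add_mono) auto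
  finally show ?thesis by simp
qed

end

theorem theorem6p3:
  fixes \<Omega> :: "pt set" and T0 T Th :: "tri set" and f :: "pt \<Rightarrow> real"
    and u uh :: pw_affine and \<omega>0 :: real
  assumes "lipschitz_domain \<Omega>"
    and "regular_triangulation \<Omega> T0"
    and "\<omega>0 > 0"
    and "\<forall>T'\<in>admissible \<Omega> T0. \<forall>K\<in>T'. min_angle_ge \<omega>0 K"
    and "T \<in> admissible \<Omega> T0" and "Th \<in> admissible \<Omega> T0"
    and "nvb_step\<^sup>*\<^sup>* T Th"
    and "f \<in> borel_measurable lebesgue"
    and "set_integrable lebesgue \<Omega> (\<lambda>x. (f x)^2)"
    and "CR_solution \<Omega> T f u" and "CR_solution \<Omega> Th f uh"
  shows "\<bar>eta \<Omega> T f u (T \<inter> Th) - eta \<Omega> Th f uh (T \<inter> Th)\<bar>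
           \<le> sqrt (48 * cot \<omega>0 / sqrt (2 * sin \<omega>0)) * nc_dist T u Th uh"
proof -
  interpret nested_triangulations \<Omega> T Th \<omega>0
    using assms(1,3-7) by unfold_locales (auto simp: lipschitz_domain_def admissible_def)
  have "finite (T \<inter> Th)" using regular_triangulation_finite[OF regular_coarse] by simp
  then have "\<bar>eta \<Omega> T f u (T \<inter> Th) - eta \<Omega> Th f uh (T \<inter> Th)\<bar>
      \<le> sqrt (\<Sum>(K, E)\<in>edge_pairs (T \<inter> Th).
            edge_weight K E * ((jump_grad \<Omega> T u K E - jump_grad \<Omega> Th uh K E) \<bullet> tangent E)^2)"
    using triangles_nondeg by (intro estimator_diff_le) auto
  also have "\<dots> \<le> sqrt (12 * shape_const \<omega>0 * (\<Sum>(K, L)\<in>T \<times> Th. grad_gap u uh K L))"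
    using jump_diff_sum_le by (rule real_sqrt_le_mono)
  also have "\<dots> = sqrt (12 * shape_const \<omega>0) * nc_dist T u Th uh"
    unfolding nc_dist_eq by (rule real_sqrt_mult)
  also have "\<dots> = sqrt (48 * cot \<omega>0 / sqrt (2 * sin \<omega>0)) * nc_dist T u Th uh"
    by (simp add: shape_const_def)
  finally show ?thesis .
qed

end
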